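(* Let $q$ be a prime power, $n$ a positive integer with $\gcd(q,n)=1$, $s\in\mathbb{Z}_n^*$ and $t\in\mathbb{Z}_n$ with $qt\equiv t\pmod n$. A $q$-coset $Q\subseteq\mathbb{Z}_n$ satisfies $\rho_{s,t}(Q)=Q$ if and only if there exist $k\in Q$ and an integer $j\ge0$ such that $(q^j-s)k\equiv st\pmod n$.
   Context: The $q$-cosets of $\mathbb{Z}_n$ are the orbits of $\mu_q:i\mapsto qi\bmod n$. $\rho_{s,t}:\mathbb{Z}_n\to\mathbb{Z}_n$, $i\mapsto s(i+t)\bmod n$; it maps $q$-cosets to $q$-cosets. *)

theory Defs
  imports Main "HOL-Number_Theory.Number_Theory"
begin

text \<open>Z_n is represented by the residues {0..<n} (naturals).\<close>

definition q_coset :: "nat \<Rightarrow> nat \<Rightarrow> nat \<Rightarrow> nat set" where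
  "q_coset n q i = {(q ^ j * i) mod n | j. True}"

definition is_q_coset :: "nat \<Rightarrow> nat \<Rightarrow> nat set \<Rightarrow> bool" where
  "is_q_coset n q Q \<longleftrightarrow> (\<exists>i<n. Q = q_coset n q i)"

definition rho :: "nat \<Rightarrow> nat \<Rightarrow> nat \<Rightarrow> nat \<Rightarrow> nat" where
  "rho n s t i = (s * (i + t)) mod n"

definition prime_power :: "nat \<Rightarrow> bool" where
  "prime_power q \<longleftrightarrow> (\<exists>p k. prime p \<and> k \<ge> 1 \<and> q = p ^ k)"

end

theory Submission
  imports Defs
begin

text \<open>
  Since \<open>q t \<equiv> t (mod n)\<close>, the map \<open>\<rho> = \<rho>(s,t)\<close> commutes with multiplication by
  \<open>q\<close>, so it sends the \<open>q\<close>-coset of \<open>k\<close> into the \<open>q\<close>-coset of \<open>\<rho>(k)\<close>.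
  Hence \<open>\<rho>\<close> fixes \<open>Q\<close> iff \<open>\<rho>(k) \<equiv> q^j k\<close> for some \<open>k \<in> Q\<close> and some \<open>j\<close>,
  because every element of a coset generates it (this uses \<open>gcd(q,n) = 1\<close>, the only
  property of \<open>q\<close> needed); equality rather than inclusion comes for free since \<open>\<rho>\<close> is
  injective on the finite set \<open>Q\<close>.
\<close>

lemma q_coset_subset_lessThan: "n > 0 \<Longrightarrow> q_coset n q i \<subseteq> {..<n}"
  unfolding q_coset_def by auto

lemma mod_in_q_coset: "i mod n \<in> q_coset n q i"
  unfolding q_coset_def by (auto intro: exI[of _ 0])

lemma q_coset_mod: "q_coset n q (i mod n) = q_coset n q i"
  unfolding q_coset_def by (simp add: mod_mult_right_eq)

lemma q_coset_mult_closed: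
  assumes "x \<in> q_coset n q i"
  shows "(q ^ a * x) mod n \<in> q_coset n q i"
proof -
  obtain j where "x = (q ^ j * i) mod n"
    using assms unfolding q_coset_def by auto
  then have "(q ^ a * x) mod n = (q ^ (a + j) * i) mod n"
    by (simp add: mod_mult_right_eq power_add mult.assoc)
  then show ?thesis
    unfolding q_coset_def by blast
qed

lemma q_coset_subset_of_mem:
  assumes "k \<in> q_coset n q i"
  shows "q_coset n q k \<subseteq> q_coset n q i"
proof
  fix x assume "x \<in> q_coset n q k"
  then obtain j where "x = (q ^ j * k) mod n"
    unfolding q_coset_def by auto
  with q_coset_mult_closed[OF assms] show "x \<in> q_coset n q i"
    by blast
qed

lemma mod_in_q_coset_of_mem:
  assumes "n > 0" and "coprime q n" and "k \<in> q_coset n q i"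
  shows "i mod n \<in> q_coset n q k"
proof -
  obtain a where a: "k = (q ^ a * i) mod n"
    using assms(3) unfolding q_coset_def by auto
  obtain m where m: "totient n = Suc m"
    using assms(1) gr0_implies_Suc totient_gt_0_iff by blast
  have "[(q ^ totient n) ^ a = 1 ^ a] (mod n)"
    using euler_theorem[OF assms(2)] by (rule cong_pow)
  moreover have "(q ^ totient n) ^ a = q ^ (m * a) * q ^ a"
    unfolding m power_mult[symmetric] by (simp add: power_add)
  ultimately have "[q ^ (m * a) * q ^ a = 1] (mod n)"
    by simp
  then have "[q ^ (m * a) * q ^ a * i = 1 * i] (mod n)"
    by (rule cong_scalar_right)
  moreover have "(q ^ (m * a) * k) mod n = (q ^ (m * a) * q ^ a * i) mod n"
    unfolding a by (simp add: mod_mult_right_eq mult.assoc)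
  ultimately have "i mod n = (q ^ (m * a) * k) mod n"
    by (simp add: cong_def)
  then show ?thesis
    unfolding q_coset_def by blast
qed

lemma q_coset_eq_of_mem:
  assumes "n > 0" and "coprime q n" and "k \<in> q_coset n q i"
  shows "q_coset n q k = q_coset n q i"
  using q_coset_subset_of_mem[OF assms(3)]
    q_coset_subset_of_mem[OF mod_in_q_coset_of_mem[OF assms]]
  by (simp add: q_coset_mod)

lemma rho_mult_q_power:
  assumes "[q * t = t] (mod n)"
  shows "rho n s t ((q ^ a * x) mod n) = (q ^ a * rho n s t x) mod n"
proof -
  have qt: "[q ^ a * t = t] (mod n)"
  proof (induction a)
    case (Suc a)
    have "[q * (q ^ a * t) = q * t] (mod n)"
      using Suc by (rule cong_scalar_left)
    with assms show ?case
      by (simp add: mult.assoc cong_trans)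
  qed simp
  have "[s * ((q ^ a * x) mod n + t) = s * (q ^ a * x + q ^ a * t)] (mod n)"
    by (intro cong_mult cong_add cong_refl cong_sym[OF qt]) (simp add: cong_def)
  also have "s * (q ^ a * x + q ^ a * t) = q ^ a * (s * (x + t))"
    by (simp add: algebra_simps)
  finally show ?thesis
    unfolding rho_def cong_def by (simp add: mod_mult_right_eq)
qed

lemma inj_on_rho:
  assumes "coprime s n"
  shows "inj_on (rho n s t) {..<n}"
proof
  fix x y assume "x \<in> {..<n}" "y \<in> {..<n}" "rho n s t x = rho n s t y"
  then have "[s * (x + t) = s * (y + t)] (mod n)"
    unfolding rho_def cong_def by simp
  then have "[x = y] (mod n)"
    using cong_mult_lcancel_nat[OF assms] cong_add_rcancel_nat by blast
  with \<open>x \<in> {..<n}\<close> \<open>y \<in> {..<n}\<close> show "x = y"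
    by (simp add: cong_def)
qed

lemma rho_image_q_coset:
  assumes "n > 0" and "coprime s n" and "[q * t = t] (mod n)"
    and "rho n s t k \<in> q_coset n q k"
  shows "rho n s t ` q_coset n q k = q_coset n q k"
proof (rule endo_inj_surj)
  show "finite (q_coset n q k)"
    by (rule finite_subset[OF q_coset_subset_lessThan[OF assms(1)] finite_lessThan])
  show "inj_on (rho n s t) (q_coset n q k)"
    by (rule inj_on_subset[OF inj_on_rho[OF assms(2)] q_coset_subset_lessThan[OF assms(1)]])
  show "rho n s t ` q_coset n q k \<subseteq> q_coset n q k"
  proof
    fix y assume "y \<in> rho n s t ` q_coset n q k"
    then obtain a where "y = rho n s t ((q ^ a * k) mod n)"
      unfolding q_coset_def by blast
    also have "\<dots> = (q ^ a * rho n s t k) mod n"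
      by (rule rho_mult_q_power[OF assms(3)])
    finally show "y \<in> q_coset n q k"
      using q_coset_mult_closed[OF assms(4)] by simp
  qed
qed

lemma rho_eq_q_power_mult_iff:
  "rho n s t k = (q ^ j * k) mod n \<longleftrightarrow>
    [(int q ^ j - int s) * int k = int s * int t] (mod int n)"
proof -
  have "rho n s t k = (q ^ j * k) mod n \<longleftrightarrow> [q ^ j * k = s * (k + t)] (mod n)"
    unfolding rho_def cong_def by auto
  also have "\<dots> \<longleftrightarrow> [int (q ^ j * k) = int (s * (k + t))] (mod int n)"
    by (rule cong_int_iff[symmetric])
  also have "\<dots> \<longleftrightarrow> [(int q ^ j - int s) * int k = int s * int t] (mod int n)"
    by (simp add: cong_iff_dvd_diff algebra_simps)
  finally show ?thesis .
qed

theorem lemma3p2: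
  fixes q n s t :: nat and Q :: "nat set"
  assumes "prime_power q" and "n > 0" and "coprime q n"
    and "s < n" and "coprime s n"
    and "t < n" and "[q * t = t] (mod n)"
    and "is_q_coset n q Q"
  shows "rho n s t ` Q = Q \<longleftrightarrow>
    (\<exists>k\<in>Q. \<exists>j::nat. [(int q ^ j - int s) * int k = int s * int t] (mod int n))"
proof -
  obtain i where Qi: "Q = q_coset n q i"
    using assms(8) unfolding is_q_coset_def by auto
  have Qk: "Q = q_coset n q k" if "k \<in> Q" for k
    using q_coset_eq_of_mem[OF assms(2,3)] that Qi by simp
  show ?thesis
  proof
    assume "rho n s t ` Q = Q"
    moreover have "i mod n \<in> Q"
      unfolding Qi by (rule mod_in_q_coset)
    ultimately have "rho n s t (i mod n) \<in> q_coset n q (i mod n)"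
      using Qk by blast
    then show "\<exists>k\<in>Q. \<exists>j. [(int q ^ j - int s) * int k = int s * int t] (mod int n)"
      using \<open>i mod n \<in> Q\<close> unfolding q_coset_def rho_eq_q_power_mult_iff[symmetric] by blast
  next
    assume "\<exists>k\<in>Q. \<exists>j. [(int q ^ j - int s) * int k = int s * int t] (mod int n)"
    then obtain k j where "k \<in> Q" and "rho n s t k = (q ^ j * k) mod n"
      unfolding rho_eq_q_power_mult_iff[symmetric] by blast
    then have "rho n s t k \<in> q_coset n q k"
      unfolding q_coset_def by blast
    then show "rho n s t ` Q = Q"
      using rho_image_q_coset[OF assms(2,5,7)] Qk[OF \<open>k \<in> Q\<close>] by simp
  qed
qed

end
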